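(* Let $Q$ be a quadrangulation with a strong labeling, with edges colored and oriented as induced by the labeling. If $v$ is a white (respectively black) vertex and $uv$ is an edge oriented towards $v$, then the outgoing edge at $v$ having the same color as $uv$ is the next outgoing edge to the right (respectively left) of $uv$, i.e. the first outgoing edge met when rotating around $v$ starting from $uv$ counterclockwise (respectively clockwise).
   Context: A quadrangulation is a simple plane graph with at least four vertices all of whose faces (including the outer face) are bounded by $4$-cycles; it is bipartite, and its vertices are properly colored black and white. An angle is an incidence of a vertex with a face. A strong labeling of $Q$ is a map from the angles of $Q$ to $\{0,1\}$ such that: (G0) the two black vertices on the outer face are named $s_0$ and $s_1$, and all angles at $s_i$ are labeled $i$; (G1) for each vertex $v\notin\{s_0,s_1\}$ the labels around $v$ form one non-empty cyclic interval of $1$s and one non-empty cyclic interval of $0$s; (G2) for each edge, the two labels on the two sides of the edge coincide at one endpoint and differ at the other; (G3) the labels in each bounded face, read cyclically, are $0,0,1,1$, and reading the labels of the outer face in clockwise order starting at $s_0$ they are $0,0,1,1$. The labeling induces a coloring and orientation of the edges: each edge is colored with the common label at the endpoint where its two labels coincide and is oriented towards that endpoint. *)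

theory Defs
  imports "HOL-Combinatorics.Permutations"
begin

text \<open>
Plane graphs are encoded as combinatorial maps (rotation systems).
D is a finite set of darts (half-edges); alpha is the fixed-point-free involution
sending a dart to its reverse; sigma is the counterclockwise rotation of darts
around their tail vertex. Vertices are sigma-orbits, edges are alpha-orbits,
faces are orbits of phi = sigma o alpha (phi walks a face keeping it on its right,
i.e. bounded faces clockwise, the outer face counterclockwise as drawn).
An angle (vertex-face incidence) is identified with a dart e: it is the corner at
the tail of e between (inv sigma) e and e; it lies in the face (phi-orbit) of e.
\<close>

definition orb :: "('d \<Rightarrow> 'd) \<Rightarrow> 'd \<Rightarrow> 'd set" where
  "orb f x = {(f ^^ n) x | n. True}"

definition comb_map :: "'d set \<Rightarrow> ('d \<Rightarrow> 'd) \<Rightarrow> ('d \<Rightarrow> 'd) \<Rightarrow> bool" where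
  "comb_map D \<sigma> \<alpha> \<longleftrightarrow> finite D \<and> \<sigma> permutes D \<and> \<alpha> permutes D \<and>
     (\<forall>d\<in>D. \<alpha> d \<noteq> d \<and> \<alpha> (\<alpha> d) = d)"

definition connected_map :: "'d set \<Rightarrow> ('d \<Rightarrow> 'd) \<Rightarrow> ('d \<Rightarrow> 'd) \<Rightarrow> bool" where
  "connected_map D \<sigma> \<alpha> \<longleftrightarrow>
     (\<forall>d\<in>D. \<forall>e\<in>D. (d, e) \<in> ({(x, \<sigma> x) | x. x \<in> D} \<union> {(x, \<alpha> x) | x. x \<in> D})\<^sup>*)"

text \<open>Connected genus-0 map (Euler's formula V + F = E + 2): a plane graph.\<close>
definition plane_map :: "'d set \<Rightarrow> ('d \<Rightarrow> 'd) \<Rightarrow> ('d \<Rightarrow> 'd) \<Rightarrow> bool" where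
  "plane_map D \<sigma> \<alpha> \<longleftrightarrow> comb_map D \<sigma> \<alpha> \<and> connected_map D \<sigma> \<alpha> \<and>
     card (orb \<sigma> ` D) + card (orb (\<sigma> \<circ> \<alpha>) ` D) = card (orb \<alpha> ` D) + 2"

definition simple_map :: "'d set \<Rightarrow> ('d \<Rightarrow> 'd) \<Rightarrow> ('d \<Rightarrow> 'd) \<Rightarrow> bool" where
  "simple_map D \<sigma> \<alpha> \<longleftrightarrow> (\<forall>d\<in>D. orb \<sigma> (\<alpha> d) \<noteq> orb \<sigma> d) \<and>
     (\<forall>d\<in>D. \<forall>e\<in>D. orb \<sigma> d = orb \<sigma> e \<and> orb \<sigma> (\<alpha> d) = orb \<sigma> (\<alpha> e) \<longrightarrow> d = e)"

definition quadrangulation :: "'d set \<Rightarrow> ('d \<Rightarrow> 'd) \<Rightarrow> ('d \<Rightarrow> 'd) \<Rightarrow> bool" where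
  "quadrangulation D \<sigma> \<alpha> \<longleftrightarrow> plane_map D \<sigma> \<alpha> \<and> simple_map D \<sigma> \<alpha> \<and>
     card (orb \<sigma> ` D) \<ge> 4 \<and>
     (\<forall>d\<in>D. card (orb (\<sigma> \<circ> \<alpha>) d) = 4 \<and> card (orb \<sigma> ` orb (\<sigma> \<circ> \<alpha>) d) = 4)"

definition proper_bw :: "'d set \<Rightarrow> ('d \<Rightarrow> 'd) \<Rightarrow> ('d \<Rightarrow> 'd) \<Rightarrow> ('d set \<Rightarrow> bool) \<Rightarrow> bool" where
  "proper_bw D \<sigma> \<alpha> black \<longleftrightarrow> (\<forall>d\<in>D. black (orb \<sigma> d) \<noteq> black (orb \<sigma> (\<alpha> d)))"

text \<open>Strong labeling; o is a dart of the outer face, s0 s1 the named black outer vertices,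
lab the labels of the angles (angles = darts).\<close>
definition strong_labeling ::
  "'d set \<Rightarrow> ('d \<Rightarrow> 'd) \<Rightarrow> ('d \<Rightarrow> 'd) \<Rightarrow> ('d set \<Rightarrow> bool) \<Rightarrow> 'd \<Rightarrow> 'd set \<Rightarrow> 'd set
     \<Rightarrow> ('d \<Rightarrow> nat) \<Rightarrow> bool" where
  "strong_labeling D \<sigma> \<alpha> black od s0 s1 lab \<longleftrightarrow>
     od \<in> D \<and> (\<forall>d\<in>D. lab d \<in> {0, 1}) \<and>
     \<comment> \<open>(G0)\<close>
     s0 \<noteq> s1 \<and> black s0 \<and> black s1 \<and>
     s0 \<in> orb \<sigma> ` orb (\<sigma> \<circ> \<alpha>) od \<and> s1 \<in> orb \<sigma> ` orb (\<sigma> \<circ> \<alpha>) od \<and>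
     (\<forall>d\<in>D. orb \<sigma> d = s0 \<longrightarrow> lab d = 0) \<and>
     (\<forall>d\<in>D. orb \<sigma> d = s1 \<longrightarrow> lab d = 1) \<and>
     \<comment> \<open>(G1): around v (ccw order) one non-empty interval of 1s and one of 0s\<close>
     (\<forall>d\<in>D. orb \<sigma> d \<notin> {s0, s1} \<longrightarrow>
        (\<exists>a\<in>orb \<sigma> d. \<exists>k. 0 < k \<and> k < card (orb \<sigma> d) \<and>
           (\<forall>i < card (orb \<sigma> d). lab ((\<sigma> ^^ i) a) = (if i < k then 1 else 0)))) \<and>
     \<comment> \<open>(G2): the angles beside the edge of d at its tail are d and sigma d\<close>
     (\<forall>d\<in>D. (lab d = lab (\<sigma> d)) \<noteq> (lab (\<alpha> d) = lab (\<sigma> (\<alpha> d)))) \<and>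
     \<comment> \<open>(G3) bounded faces: cyclically 0,0,1,1\<close>
     (\<forall>d\<in>D. orb (\<sigma> \<circ> \<alpha>) d \<noteq> orb (\<sigma> \<circ> \<alpha>) od \<longrightarrow>
        (\<exists>e\<in>orb (\<sigma> \<circ> \<alpha>) d. lab e = 0 \<and> lab ((\<sigma> \<circ> \<alpha>) e) = 0 \<and>
            lab (((\<sigma> \<circ> \<alpha>) ^^ 2) e) = 1 \<and> lab (((\<sigma> \<circ> \<alpha>) ^^ 3) e) = 1)) \<and>
     \<comment> \<open>(G3) outer face, clockwise (= inverse phi) from s0: 0,0,1,1\<close>
     (\<forall>e\<in>orb (\<sigma> \<circ> \<alpha>) od. orb \<sigma> e = s0 \<longrightarrow>
        lab e = 0 \<and> lab (inv (\<sigma> \<circ> \<alpha>) e) = 0 \<and>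
        lab ((inv (\<sigma> \<circ> \<alpha>) ^^ 2) e) = 1 \<and> lab ((inv (\<sigma> \<circ> \<alpha>) ^^ 3) e) = 1)"

text \<open>Induced orientation: the edge of dart d is oriented towards the tail of d iff the
two labels beside it at the tail of d coincide; its colour is that common label.\<close>
definition towards_tail :: "('d \<Rightarrow> 'd) \<Rightarrow> ('d \<Rightarrow> nat) \<Rightarrow> 'd \<Rightarrow> bool" where
  "towards_tail \<sigma> lab d \<longleftrightarrow> lab d = lab (\<sigma> d)"

definition outgoing :: "('d \<Rightarrow> 'd) \<Rightarrow> ('d \<Rightarrow> 'd) \<Rightarrow> ('d \<Rightarrow> nat) \<Rightarrow> 'd \<Rightarrow> bool" where
  "outgoing \<sigma> \<alpha> lab d \<longleftrightarrow> towards_tail \<sigma> lab (\<alpha> d)"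

definition ecolor :: "('d \<Rightarrow> 'd) \<Rightarrow> ('d \<Rightarrow> 'd) \<Rightarrow> ('d \<Rightarrow> nat) \<Rightarrow> 'd \<Rightarrow> nat" where
  "ecolor \<sigma> \<alpha> lab d = (if lab d = lab (\<sigma> d) then lab d else lab (\<alpha> d))"

definition first_out_same_color ::
  "('d \<Rightarrow> 'd) \<Rightarrow> ('d \<Rightarrow> 'd) \<Rightarrow> ('d \<Rightarrow> nat) \<Rightarrow> ('d \<Rightarrow> 'd) \<Rightarrow> 'd \<Rightarrow> bool" where
  "first_out_same_color \<sigma> \<alpha> lab r d \<longleftrightarrow>
     (\<exists>k > 0. outgoing \<sigma> \<alpha> lab ((r ^^ k) d) \<and>
        (\<forall>j. 0 < j \<and> j < k \<longrightarrow> \<not> outgoing \<sigma> \<alpha> lab ((r ^^ j) d)) \<and>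
        ecolor \<sigma> \<alpha> lab ((r ^^ k) d) = ecolor \<sigma> \<alpha> lab d \<and>
        (\<forall>e\<in>orb \<sigma> d. outgoing \<sigma> \<alpha> lab e \<and> ecolor \<sigma> \<alpha> lab e = ecolor \<sigma> \<alpha> lab d
            \<longrightarrow> e = (r ^^ k) d))"

end

theory Submission
  imports Defs "HOL-Combinatorics.Orbits"
begin

(*
  Let phi = sigma o alpha be the face permutation. As every face reads 0,0,1,1 cyclically, each
  angle carries the same label as exactly one of its two neighbours in its face. With (G2) this
  shows that the property "lab a = lab (phi a) iff the tail of a is white" is preserved by sigma
  and by alpha; it holds at the outer angle of s0, so by connectivity it holds at every dart.
  Hence an outgoing dart x, i.e. one with lab x different from lab (sigma x), has colour lab x
  at a white vertex and colour lab (sigma x) at a black one. By (G1) an inner vertex has exactly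
  two such darts, one for each value of lab x. Starting from an incoming dart d of colour
  c = lab d = lab (sigma d), the first label change met counterclockwise is at a dart labelled c,
  and the first one met clockwise is at a dart x with lab (sigma x) = c: in both cases the
  outgoing dart of colour c.
*)

lemma orb_eq_orbit:
  assumes "permutation f"
  shows "orb f x = orbit f x"
  by (simp add: orb_def orbit_altdef_permutation[OF assms])

lemma funpow_in_orb: "(f ^^ n) x \<in> orb f x"
  unfolding orb_def by blast

lemma self_in_orb: "x \<in> orb f x"
  using funpow_in_orb[where n = 0] by simp

lemma orb_eq_of_mem:
  assumes "permutation f" "y \<in> orb f x"
  shows "orb f y = orb f x"
  using assms orbit_cyclic_eq3[OF cyclic_on_orbit'[OF assms(1)]] by (simp add: orb_eq_orbit)

lemma orb_inv:
  assumes "permutation f"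
  shows "orb (inv f) x = orb f x"
  using assms by (simp add: orb_eq_orbit permutation_inverse orbit_inv_eq)

lemma orb_subset_permutes:
  assumes "f permutes S" "finite S" "x \<in> S"
  shows "orb f x \<subseteq> S"
  using assms permutes_orbit_subset orb_eq_orbit permutation_permutes by metis

lemma orb_eq_image_funpow:
  assumes "(f ^^ n) x = x" "0 < n"
  shows "orb f x = (\<lambda>i. (f ^^ i) x) ` {..<n}"
proof (intro set_eqI iffI)
  fix y
  assume "y \<in> orb f x"
  then obtain m where "y = (f ^^ m) x"
    unfolding orb_def by blast
  then have "y = (f ^^ (m mod n)) x"
    using funpow_mod_eq[OF assms(1)] by simp
  then show "y \<in> (\<lambda>i. (f ^^ i) x) ` {..<n}"
    using assms(2) by simp
qed (auto simp: orb_def)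

lemma funpow_card_orb:
  assumes "permutation f"
  shows "(f ^^ card (orb f x)) x = x"
proof -
  have self: "x \<in> orbit f x"
    using assms by (rule permutation_self_in_orbit)
  have "card (orb f x) = funpow_dist1 f x x"
    using orbit_conv_funpow_dist1[OF self] inj_on_funpow_dist1[OF self]
    by (simp add: orb_eq_orbit[OF assms] card_image)
  then show ?thesis
    using funpow_dist1_prop[OF self] by simp
qed

lemma pattern_0011_exactly_one_equal_neighbour:
  assumes "bij f" and period: "(f ^^ 4) x = x"
    and pattern: "L x = L (f x)" "L (f x) \<noteq> L ((f ^^ 2) x)" "L ((f ^^ 2) x) = L ((f ^^ 3) x)"
    and "b \<in> orb f x"
  shows "(L (inv f b) = L b) \<noteq> (L b = L (f b))"
proof -
  have inv_f: "inv f (f y) = y" for y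
    using \<open>bij f\<close> by (simp add: bij_is_inj)
  have "f ((f ^^ 3) x) = x"
    using period by (simp add: eval_nat_numeral)
  then have inv_x: "inv f x = (f ^^ 3) x"
    using inv_f by metis
  obtain i where "i < 4" "b = (f ^^ i) x"
    using \<open>b \<in> orb f x\<close> orb_eq_image_funpow[OF period] by auto
  then have "b = x \<or> b = f x \<or> b = (f ^^ 2) x \<or> b = (f ^^ 3) x"
    by (auto simp: less_Suc_eq eval_nat_numeral)
  then show ?thesis
    using pattern period inv_x by (auto simp: inv_f eval_nat_numeral)
qed

lemma single_interval_change_unique:
  fixes L :: "'a \<Rightarrow> nat"
  assumes period: "(f ^^ n) a = a" and k: "0 < k" "k < n"
    and interval: "\<forall>i<n. L ((f ^^ i) a) = (if i < k then 1 else 0)"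
    and "x \<in> orb f a" "L x \<noteq> L (f x)" "y \<in> orb f a" "L y \<noteq> L (f y)" "L x = L y"
  shows "x = y"
proof -
  have position: "z = (f ^^ (if L z = 1 then k - 1 else n - 1)) a"
    if z: "z \<in> orb f a" "L z \<noteq> L (f z)" for z
  proof -
    obtain i where i: "i < n" "z = (f ^^ i) a"
      using z(1) orb_eq_image_funpow[OF period] k by auto
    have fz: "f z = (f ^^ Suc i) a"
      using i by simp
    have "i = (if i < k then k - 1 else n - 1)"
    proof (cases "Suc i < n")
      case True
      then show ?thesis
        using z(2) fz i interval[rule_format, of i] interval[rule_format, of "Suc i"]
        by (auto split: if_splits)
    next
      case False
      then have "Suc i = n"
        using i by simp
      then have "f z = a"
        using fz period by simp
      then show ?thesis
        using z(2) False i k interval[rule_format, of i] interval[rule_format, of 0]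
        by (auto split: if_splits)
    qed
    then show ?thesis
      using i interval by auto
  qed
  show ?thesis
    using position assms(5-) by metis
qed

lemma connected_map_induct:
  assumes "connected_map D \<sigma> \<alpha>" "e \<in> D" "a \<in> D" "P e"
    and sigma_step: "\<And>x. x \<in> D \<Longrightarrow> P x \<Longrightarrow> P (\<sigma> x)"
    and alpha_step: "\<And>x. x \<in> D \<Longrightarrow> P x \<Longrightarrow> P (\<alpha> x)"
  shows "P a"
proof -
  have "(e, a) \<in> ({(x, \<sigma> x) | x. x \<in> D} \<union> {(x, \<alpha> x) | x. x \<in> D})\<^sup>*"
    using assms(1-3) unfolding connected_map_def by blast
  then show ?thesis
    by (induction rule: rtrancl_induct) (use \<open>P e\<close> sigma_step alpha_step in auto)
qed

locale strongly_labeled_quadrangulation =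
  fixes D :: "'d set" and \<sigma> \<alpha> :: "'d \<Rightarrow> 'd" and black :: "'d set \<Rightarrow> bool"
    and od :: 'd and s0 s1 :: "'d set" and lab :: "'d \<Rightarrow> nat"
  assumes quad: "quadrangulation D \<sigma> \<alpha>"
    and bw: "proper_bw D \<sigma> \<alpha> black"
    and labeling: "strong_labeling D \<sigma> \<alpha> black od s0 s1 lab"
begin

abbreviation \<phi> :: "'d \<Rightarrow> 'd" where
  "\<phi> \<equiv> \<sigma> \<circ> \<alpha>"

lemma comb_map: "comb_map D \<sigma> \<alpha>"
  and connected: "connected_map D \<sigma> \<alpha>"
  using quad by (simp_all add: quadrangulation_def plane_map_def)

lemma finite_darts: "finite D"
  and sigma_permutes: "\<sigma> permutes D"
  and alpha_permutes: "\<alpha> permutes D"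
  and alpha_alpha: "a \<in> D \<Longrightarrow> \<alpha> (\<alpha> a) = a"
  using comb_map by (simp_all add: comb_map_def)

lemma card_face: "a \<in> D \<Longrightarrow> card (orb \<phi> a) = 4"
  using quad by (simp add: quadrangulation_def)

lemma phi_permutes: "\<phi> permutes D"
  using alpha_permutes sigma_permutes by (rule permutes_compose)

lemma permutation_sigma: "permutation \<sigma>"
  and permutation_phi: "permutation \<phi>"
  using finite_darts sigma_permutes phi_permutes permutation_permutes by blast+

lemma bij_phi: "bij \<phi>"
  using permutation_bijective permutation_phi by blast

lemma sigma_in_darts: "a \<in> D \<Longrightarrow> \<sigma> a \<in> D"
  and alpha_in_darts: "a \<in> D \<Longrightarrow> \<alpha> a \<in> D"
  using sigma_permutes alpha_permutes by (simp_all add: permutes_in_image)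

lemma orb_sigma_subset: "a \<in> D \<Longrightarrow> orb \<sigma> a \<subseteq> D"
  by (rule orb_subset_permutes[OF sigma_permutes finite_darts])

lemma in_vertex_orbit:
  assumes "a \<in> D" "x \<in> orb \<sigma> a"
  shows "x \<in> D" "orb \<sigma> x = orb \<sigma> a"
  using assms orb_sigma_subset orb_eq_of_mem[OF permutation_sigma] by auto

lemma orb_phi_subset: "a \<in> D \<Longrightarrow> orb \<phi> a \<subseteq> D"
  by (rule orb_subset_permutes[OF phi_permutes finite_darts])

lemma face_period: "a \<in> D \<Longrightarrow> (\<phi> ^^ 4) a = a"
  using funpow_card_orb[OF permutation_phi, of a] card_face[of a] by simp

lemma lab_binary: "a \<in> D \<Longrightarrow> lab a \<in> {0, 1}"
  using labeling by (simp add: strong_labeling_def)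

lemma lab_edge: "a \<in> D \<Longrightarrow> (lab a = lab (\<sigma> a)) \<noteq> (lab (\<alpha> a) = lab (\<sigma> (\<alpha> a)))"
  using labeling by (simp add: strong_labeling_def)

lemma outer_dart: "od \<in> D"
  and black_s0: "black s0"
  using labeling by (simp_all add: strong_labeling_def)

lemma outer_face_labels_at_s0:
  obtains e where "e \<in> orb \<phi> od" "orb \<sigma> e = s0"
    "lab e = 0" "lab (inv \<phi> e) = 0" "lab ((inv \<phi> ^^ 2) e) = 1" "lab ((inv \<phi> ^^ 3) e) = 1"
proof -
  have "s0 \<in> orb \<sigma> ` orb \<phi> od"
    and "\<forall>e\<in>orb \<phi> od. orb \<sigma> e = s0 \<longrightarrow> lab e = 0 \<and> lab (inv \<phi> e) = 0 \<and>
           lab ((inv \<phi> ^^ 2) e) = 1 \<and> lab ((inv \<phi> ^^ 3) e) = 1"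
    using labeling by (simp_all add: strong_labeling_def)
  then show ?thesis
    using that by blast
qed

lemma bounded_face_labels_0011:
  assumes "b \<in> D" "orb \<phi> b \<noteq> orb \<phi> od"
  obtains e where "e \<in> orb \<phi> b"
    "lab e = 0" "lab (\<phi> e) = 0" "lab ((\<phi> ^^ 2) e) = 1" "lab ((\<phi> ^^ 3) e) = 1"
proof -
  have "\<forall>d\<in>D. orb \<phi> d \<noteq> orb \<phi> od \<longrightarrow>
          (\<exists>e\<in>orb \<phi> d. lab e = 0 \<and> lab (\<phi> e) = 0 \<and>
             lab ((\<phi> ^^ 2) e) = 1 \<and> lab ((\<phi> ^^ 3) e) = 1)"
    using labeling unfolding strong_labeling_def by (elim conjE) assumption
  then show ?thesis
    using assms that by blast
qed

lemma face_label_exactly_one_equal_neighbour: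
  assumes "b \<in> D"
  shows "(lab (inv \<phi> b) = lab b) \<noteq> (lab b = lab (\<phi> b))"
proof (cases "orb \<phi> b = orb \<phi> od")
  case True
  \<comment> \<open>The outer face reads 0,0,1,1 along inv phi; the claim is symmetric in phi and inv phi.\<close>
  obtain e where e: "e \<in> orb \<phi> od"
    and lab_e: "lab e = 0" "lab (inv \<phi> e) = 0" "lab ((inv \<phi> ^^ 2) e) = 1" "lab ((inv \<phi> ^^ 3) e) = 1"
    by (rule outer_face_labels_at_s0)
  have "e \<in> D"
    using e orb_phi_subset outer_dart by blast
  then have "(inv \<phi> ^^ 4) e = (inv \<phi> ^^ 4) ((\<phi> ^^ 4) e)"
    using face_period by simp
  also have "\<dots> = e"
    using inv_fn_o_fn_is_id[OF bij_phi] by (simp add: fun_eq_iff)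
  finally have period: "(inv \<phi> ^^ 4) e = e" .
  have "b \<in> orb (inv \<phi>) e"
    using True e self_in_orb orb_eq_of_mem[OF permutation_phi] orb_inv[OF permutation_phi] by metis
  moreover have "lab e = lab (inv \<phi> e)" "lab (inv \<phi> e) \<noteq> lab ((inv \<phi> ^^ 2) e)"
    "lab ((inv \<phi> ^^ 2) e) = lab ((inv \<phi> ^^ 3) e)"
    using lab_e by simp_all
  ultimately have "(lab (inv (inv \<phi>) b) = lab b) \<noteq> (lab b = lab (inv \<phi> b))"
    using bij_imp_bij_inv[OF bij_phi] period by (metis pattern_0011_exactly_one_equal_neighbour)
  then show ?thesis
    unfolding inv_inv_eq[OF bij_phi] by argo
next
  case False
  obtain e where e: "e \<in> orb \<phi> b"
    and lab_e: "lab e = 0" "lab (\<phi> e) = 0" "lab ((\<phi> ^^ 2) e) = 1" "lab ((\<phi> ^^ 3) e) = 1"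
    using \<open>b \<in> D\<close> False by (rule bounded_face_labels_0011)
  have "b \<in> orb \<phi> e"
    using e self_in_orb orb_eq_of_mem[OF permutation_phi] by metis
  moreover have "e \<in> D"
    using e orb_phi_subset \<open>b \<in> D\<close> by blast
  moreover have "lab e = lab (\<phi> e)" "lab (\<phi> e) \<noteq> lab ((\<phi> ^^ 2) e)"
    "lab ((\<phi> ^^ 2) e) = lab ((\<phi> ^^ 3) e)"
    using lab_e by simp_all
  ultimately show ?thesis
    using bij_phi face_period by (metis pattern_0011_exactly_one_equal_neighbour)
qed

lemma lab_face_step_eq_iff_edge_change:
  assumes "a \<in> D"
  shows "lab a = lab (\<phi> a) \<longleftrightarrow> lab (\<alpha> a) \<noteq> lab (\<sigma> a)"
proof -
  have "lab a \<in> {0, 1}" "lab (\<alpha> a) \<in> {0, 1}" "lab (\<sigma> a) \<in> {0, 1}" "lab (\<sigma> (\<alpha> a)) \<in> {0, 1}"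
    using assms sigma_in_darts alpha_in_darts lab_binary by blast+
  then show ?thesis
    using lab_edge[OF assms] by auto
qed

lemma lab_face_step_eq_iff_white:
  assumes "a \<in> D"
  shows "lab a = lab (\<phi> a) \<longleftrightarrow> \<not> black (orb \<sigma> a)"
proof -
  define P where "P x \<longleftrightarrow> (lab x = lab (\<phi> x) \<longleftrightarrow> \<not> black (orb \<sigma> x))" for x
  have phi_alpha: "\<phi> (\<alpha> x) = \<sigma> x" if "x \<in> D" for x
    using alpha_alpha that by simp
  have alpha_step: "P (\<alpha> x)" if "x \<in> D" "P x" for x
  proof -
    have "black (orb \<sigma> (\<alpha> x)) \<longleftrightarrow> \<not> black (orb \<sigma> x)"
      using bw that(1) unfolding proper_bw_def by blast
    then show ?thesis
      using that phi_alpha lab_face_step_eq_iff_edge_change unfolding P_def by auto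
  qed
  have sigma_step: "P (\<sigma> x)" if "x \<in> D" "P x" for x
  proof -
    have "inv \<phi> (\<sigma> x) = \<alpha> x"
      using phi_alpha[OF that(1)] bij_phi by (metis bij_is_inj inv_f_f)
    moreover have "orb \<sigma> (\<sigma> x) = orb \<sigma> x"
      using orb_eq_of_mem[OF permutation_sigma] funpow_in_orb[where n = 1] by fastforce
    ultimately show ?thesis
      using that sigma_in_darts face_label_exactly_one_equal_neighbour[of "\<sigma> x"]
        lab_face_step_eq_iff_edge_change
      unfolding P_def by auto
  qed
  obtain e where e: "e \<in> orb \<phi> od" "orb \<sigma> e = s0" "lab e = 0" "lab (inv \<phi> e) = 0"
    by (rule outer_face_labels_at_s0)
  have "e \<in> D"
    using e orb_phi_subset outer_dart by blast
  then have "P e"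
    using e black_s0 face_label_exactly_one_equal_neighbour[of e] unfolding P_def by auto
  then have "P a"
    using connected_map_induct[OF connected \<open>e \<in> D\<close> assms] alpha_step sigma_step by blast
  then show ?thesis
    unfolding P_def .
qed

lemma outgoing_iff_lab_change:
  assumes "a \<in> D"
  shows "outgoing \<sigma> \<alpha> lab a \<longleftrightarrow> lab a \<noteq> lab (\<sigma> a)"
  using lab_edge[OF assms] unfolding outgoing_def towards_tail_def by blast

lemma ecolor_outgoing:
  assumes "a \<in> D" "outgoing \<sigma> \<alpha> lab a"
  shows "ecolor \<sigma> \<alpha> lab a = lab (\<phi> a)"
  using assms outgoing_iff_lab_change[OF assms(1)]
  unfolding ecolor_def outgoing_def towards_tail_def by simp

lemma ecolor_outgoing_white:
  assumes "a \<in> D" "outgoing \<sigma> \<alpha> lab a" "\<not> black (orb \<sigma> a)"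
  shows "ecolor \<sigma> \<alpha> lab a = lab a"
  using ecolor_outgoing[OF assms(1,2)] lab_face_step_eq_iff_white[OF assms(1)] assms(3) by simp

lemma ecolor_outgoing_black:
  assumes "a \<in> D" "outgoing \<sigma> \<alpha> lab a" "black (orb \<sigma> a)"
  shows "ecolor \<sigma> \<alpha> lab a = lab (\<sigma> a)"
proof -
  have "lab a \<in> {0, 1}" "lab (\<sigma> a) \<in> {0, 1}" "lab (\<phi> a) \<in> {0, 1}"
    using assms(1) sigma_in_darts alpha_in_darts lab_binary by simp_all
  then show ?thesis
    using ecolor_outgoing[OF assms(1,2)] lab_face_step_eq_iff_white[OF assms(1)] assms(3)
      outgoing_iff_lab_change[OF assms(1)] assms(2) by auto
qed

lemma inner_vertex_interval:
  assumes "a \<in> D" "orb \<sigma> a \<notin> {s0, s1}"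
  obtains b k where "b \<in> orb \<sigma> a" "0 < k" "k < card (orb \<sigma> a)"
    "\<forall>i<card (orb \<sigma> a). lab ((\<sigma> ^^ i) b) = (if i < k then 1 else 0)"
proof -
  have "\<forall>d\<in>D. orb \<sigma> d \<notin> {s0, s1} \<longrightarrow>
          (\<exists>b\<in>orb \<sigma> d. \<exists>k. 0 < k \<and> k < card (orb \<sigma> d) \<and>
             (\<forall>i < card (orb \<sigma> d). lab ((\<sigma> ^^ i) b) = (if i < k then 1 else 0)))"
    using labeling unfolding strong_labeling_def by (elim conjE) assumption
  then show ?thesis
    using assms that by blast
qed

lemma inner_vertex_outgoing_unique:
  assumes "a \<in> D" "orb \<sigma> a \<notin> {s0, s1}" "x \<in> orb \<sigma> a" "y \<in> orb \<sigma> a"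
    and "outgoing \<sigma> \<alpha> lab x" "outgoing \<sigma> \<alpha> lab y" "lab x = lab y"
  shows "x = y"
proof -
  obtain b k where b: "b \<in> orb \<sigma> a" and k: "0 < k" "k < card (orb \<sigma> a)"
    and interval: "\<forall>i<card (orb \<sigma> a). lab ((\<sigma> ^^ i) b) = (if i < k then 1 else 0)"
    using assms(1,2) by (rule inner_vertex_interval)
  have same_vertex: "orb \<sigma> b = orb \<sigma> a"
    using orb_eq_of_mem[OF permutation_sigma b] .
  have "(\<sigma> ^^ card (orb \<sigma> a)) b = b"
    using funpow_card_orb[OF permutation_sigma, of b] same_vertex by simp
  moreover have "x \<in> D" "y \<in> D"
    using assms(1,3,4) orb_sigma_subset by blast+
  ultimately show ?thesis
    using single_interval_change_unique[OF _ k interval] assms(3-) same_vertex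
      outgoing_iff_lab_change by metis
qed

lemma inner_vertex_outgoing_color_unique:
  assumes "a \<in> D" "orb \<sigma> a \<notin> {s0, s1}" "x \<in> orb \<sigma> a" "y \<in> orb \<sigma> a"
    and "outgoing \<sigma> \<alpha> lab x" "outgoing \<sigma> \<alpha> lab y" "ecolor \<sigma> \<alpha> lab x = ecolor \<sigma> \<alpha> lab y"
  shows "x = y"
proof -
  have x: "x \<in> D" "orb \<sigma> x = orb \<sigma> a" and y: "y \<in> D" "orb \<sigma> y = orb \<sigma> a"
    using in_vertex_orbit[OF assms(1,3)] in_vertex_orbit[OF assms(1,4)] by simp_all
  have "lab x = lab y"
  proof (cases "black (orb \<sigma> a)")
    case True
    then have "lab (\<sigma> x) = lab (\<sigma> y)"
      using assms(5-) x y ecolor_outgoing_black by metis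
    then show ?thesis
      using outgoing_iff_lab_change x(1) y(1) assms(5,6) lab_binary[OF x(1)] lab_binary[OF y(1)]
        lab_binary[OF sigma_in_darts[OF x(1)]] lab_binary[OF sigma_in_darts[OF y(1)]] by auto
  next
    case False
    then show ?thesis
      using assms(5-) x y ecolor_outgoing_white by metis
  qed
  then show ?thesis
    using inner_vertex_outgoing_unique assms(1-6) by blast
qed

lemma inner_vertex_other_label:
  assumes "a \<in> D" "orb \<sigma> a \<notin> {s0, s1}"
  obtains y where "y \<in> orb \<sigma> a" "lab y \<noteq> lab a"
proof -
  obtain b k where b: "b \<in> orb \<sigma> a" and k: "0 < k" "k < card (orb \<sigma> a)"
    and interval: "\<forall>i<card (orb \<sigma> a). lab ((\<sigma> ^^ i) b) = (if i < k then 1 else 0)"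
    using assms by (rule inner_vertex_interval)
  have "lab b = 1" "lab ((\<sigma> ^^ (card (orb \<sigma> a) - 1)) b) = 0"
    using interval[rule_format, of 0] interval[rule_format, of "card (orb \<sigma> a) - 1"] k by auto
  moreover have "(\<sigma> ^^ (card (orb \<sigma> a) - 1)) b \<in> orb \<sigma> a"
    using b funpow_in_orb orb_eq_of_mem[OF permutation_sigma b] by metis
  ultimately show ?thesis
    using b that by (metis zero_neq_one)
qed

lemma first_out_same_color_white:
  assumes d: "d \<in> D" "orb \<sigma> d \<notin> {s0, s1}" and incoming: "towards_tail \<sigma> lab d"
    and white: "\<not> black (orb \<sigma> d)"
  shows "first_out_same_color \<sigma> \<alpha> lab \<sigma> d"
proof -
  have lab_sigma_d: "lab (\<sigma> d) = lab d" and ecolor_d: "ecolor \<sigma> \<alpha> lab d = lab d"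
    using incoming unfolding towards_tail_def ecolor_def by simp_all
  obtain y where "y \<in> orb \<sigma> d" "lab y \<noteq> lab d"
    using d by (rule inner_vertex_other_label)
  then obtain n where "lab ((\<sigma> ^^ n) d) \<noteq> lab d"
    unfolding orb_def by blast
  then obtain m where m: "lab ((\<sigma> ^^ Suc m) d) \<noteq> lab d"
    by (cases n) auto
  obtain k where run: "\<forall>i\<le>k. lab ((\<sigma> ^^ Suc i) d) = lab d"
    and change: "lab ((\<sigma> ^^ Suc (Suc k)) d) \<noteq> lab d"
    using ex_least_nat_less[of "\<lambda>i. lab ((\<sigma> ^^ Suc i) d) \<noteq> lab d", OF m] lab_sigma_d by auto
  define z where "z = (\<sigma> ^^ Suc k) d"
  have z_vertex: "z \<in> orb \<sigma> d"
    unfolding z_def by (rule funpow_in_orb)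
  have z: "z \<in> D" "orb \<sigma> z = orb \<sigma> d"
    using in_vertex_orbit[OF d(1) z_vertex] by simp_all
  have lab_z: "lab z = lab d"
    using run z_def by simp
  have out_z: "outgoing \<sigma> \<alpha> lab z"
    using outgoing_iff_lab_change[OF z(1)] change lab_z unfolding z_def by simp
  have ecolor_z: "ecolor \<sigma> \<alpha> lab z = lab d"
    using ecolor_outgoing_white[OF z(1) out_z] z(2) white lab_z by simp
  have no_earlier: "\<not> outgoing \<sigma> \<alpha> lab ((\<sigma> ^^ j) d)" if j: "0 < j" "j < Suc k" for j
  proof -
    obtain i where i: "j = Suc i" "i < k"
      using j by (cases j) auto
    have "(\<sigma> ^^ j) d \<in> D"
      using orb_sigma_subset[OF d(1)] funpow_in_orb[where f = \<sigma>] by blast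
    moreover have "lab ((\<sigma> ^^ j) d) = lab (\<sigma> ((\<sigma> ^^ j) d))"
      using run[rule_format, of i] run[rule_format, of "Suc i"] i by simp
    ultimately show ?thesis
      using outgoing_iff_lab_change by simp
  qed
  show ?thesis
    unfolding first_out_same_color_def
    using out_z no_earlier ecolor_z ecolor_d inner_vertex_outgoing_color_unique[OF d _ z_vertex _ out_z]
    unfolding z_def by (intro exI[of _ "Suc k"]) auto
qed

lemma first_out_same_color_black:
  assumes d: "d \<in> D" "orb \<sigma> d \<notin> {s0, s1}" and incoming: "towards_tail \<sigma> lab d"
    and black: "black (orb \<sigma> d)"
  shows "first_out_same_color \<sigma> \<alpha> lab (inv \<sigma>) d"
proof -
  have ecolor_d: "ecolor \<sigma> \<alpha> lab d = lab d"
    using incoming unfolding towards_tail_def ecolor_def by simp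
  have sigma_inv: "\<sigma> ((inv \<sigma> ^^ Suc i) d) = (inv \<sigma> ^^ i) d" for i
    using permutes_inverses(1)[OF sigma_permutes] by simp
  have in_vertex: "(inv \<sigma> ^^ i) d \<in> orb \<sigma> d" for i
    using funpow_in_orb orb_inv[OF permutation_sigma] by metis
  obtain y where "y \<in> orb \<sigma> d" "lab y \<noteq> lab d"
    using d by (rule inner_vertex_other_label)
  then have "y \<in> orb (inv \<sigma>) d"
    using orb_inv[OF permutation_sigma] by simp
  then obtain m where m: "lab ((inv \<sigma> ^^ m) d) \<noteq> lab d"
    using \<open>lab y \<noteq> lab d\<close> unfolding orb_def by blast
  obtain k where run: "\<forall>i\<le>k. lab ((inv \<sigma> ^^ i) d) = lab d"
    and change: "lab ((inv \<sigma> ^^ Suc k) d) \<noteq> lab d"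
    using ex_least_nat_less[of "\<lambda>i. lab ((inv \<sigma> ^^ i) d) \<noteq> lab d", OF m] by auto
  define z where "z = (inv \<sigma> ^^ Suc k) d"
  have z_vertex: "z \<in> orb \<sigma> d"
    unfolding z_def by (rule in_vertex)
  have z: "z \<in> D" "orb \<sigma> z = orb \<sigma> d"
    using in_vertex_orbit[OF d(1) z_vertex] by simp_all
  have lab_sigma_z: "lab (\<sigma> z) = lab d"
    using run sigma_inv z_def by simp
  have out_z: "outgoing \<sigma> \<alpha> lab z"
    using outgoing_iff_lab_change[OF z(1)] change lab_sigma_z unfolding z_def by simp
  have ecolor_z: "ecolor \<sigma> \<alpha> lab z = lab d"
    using ecolor_outgoing_black[OF z(1) out_z] z(2) black lab_sigma_z by simp
  have no_earlier: "\<not> outgoing \<sigma> \<alpha> lab ((inv \<sigma> ^^ j) d)" if j: "0 < j" "j < Suc k" for j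
  proof -
    obtain i where i: "j = Suc i" "i < k"
      using j by (cases j) auto
    have "(inv \<sigma> ^^ j) d \<in> D"
      using orb_sigma_subset[OF d(1)] in_vertex by blast
    moreover have "lab ((inv \<sigma> ^^ j) d) = lab (\<sigma> ((inv \<sigma> ^^ j) d))"
      using run[rule_format, of i] run[rule_format, of "Suc i"] i sigma_inv[of i] by simp
    ultimately show ?thesis
      using outgoing_iff_lab_change by simp
  qed
  show ?thesis
    unfolding first_out_same_color_def
    using out_z no_earlier ecolor_z ecolor_d inner_vertex_outgoing_color_unique[OF d _ z_vertex _ out_z]
    unfolding z_def by (intro exI[of _ "Suc k"]) auto
qed

end

theorem lemma11:
  fixes D :: "'d set" and \<sigma> \<alpha> :: "'d \<Rightarrow> 'd" and black :: "'d set \<Rightarrow> bool"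
    and od :: 'd and s0 s1 :: "'d set" and lab :: "'d \<Rightarrow> nat" and d :: 'd
  assumes "quadrangulation D \<sigma> \<alpha>"
    and "proper_bw D \<sigma> \<alpha> black"
    and "strong_labeling D \<sigma> \<alpha> black od s0 s1 lab"
    and "d \<in> D"
    and "towards_tail \<sigma> lab d"
    and "orb \<sigma> d \<notin> {s0, s1}"
  shows "(\<not> black (orb \<sigma> d) \<longrightarrow> first_out_same_color \<sigma> \<alpha> lab \<sigma> d) \<and>
         (black (orb \<sigma> d) \<longrightarrow> first_out_same_color \<sigma> \<alpha> lab (inv \<sigma>) d)"
proof -
  interpret strongly_labeled_quadrangulation D \<sigma> \<alpha> black od s0 s1 lab
    using assms(1-3) by unfold_locales
  show ?thesis
    using first_out_same_color_white[OF assms(4,6,5)] first_out_same_color_black[OF assms(4,6,5)]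
    by blast
qed

end
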